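(* Let $X \subset \mathbb{R}^n$ be finite with at least $k+1$ points. Let $(s,[x])$ and $(t,[y])$ be elements of $\Gamma_{k}(X)$, and let $(s_{0},[x_{0}])$ and $(t_{0},[y_{0}])$ be the maximal branch points below $(s,[x])$ and $(t,[y])$, respectively. Then $(s_{0},[x_{0}]) \cup (t_{0},[y_{0}])$ is the maximal branch point below $(s,[x]) \cup (t,[y])$.
   Context: $\mathbb{R}^n$ has Euclidean metric $d$. For $s\ge 0$, $V_s(X)$ is the Vietoris–Rips complex (vertex set $X$, simplices nonempty subsets with pairwise distances $\le s$), and for an integer $k\ge 0$, $L_{s,k}(X)$ is the full subcomplex of $V_s(X)$ on the vertices $x$ having at least $k$ points $x'\ne x$ of $X$ with $d(x,x')\le s$. $\Gamma_{k}(X)$ is the poset whose elements are pairs $(s,[x])$ with $s \in \mathbb{R}_{\geq 0}$ and $[x] \in \pi_{0}L_{s,k}(X)$, with $(s,[x]) \leq (t,[y])$ iff $s \leq t$ and the function $\pi_{0}L_{s,k}(X) \to \pi_{0}L_{t,k}(X)$ induced by inclusion sends $[x]$ to $[y]$. $\cup$ denotes least upper bound (join) in $\Gamma_k(X)$, which exists for any two elements. An element $(t,[x])$ of $\Gamma_{k}(X)$ is a branch point if either (1) there is $s_{0} < t$ such that for all $s$ with $s_{0} \leq s < t$ there are two distinct elements $(s,[x_{0}]) \neq (s,[x_{1}])$ with $(s,[x_{0}]) \leq (t,[x])$ and $(s,[x_{1}]) \leq (t,[x])$; or (2) there is no element $(s,[y])$ with $s<t$ and $(s,[y]) \leq (t,[x])$.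 The maximal branch point below an element $p$ is the (unique) branch point $b \le p$ such that every branch point $b' \le p$ satisfies $b' \le b$. *)

theory Defs
  imports "HOL-Analysis.Analysis"
begin


definition VR :: "real \<Rightarrow> (real ^ ('n::finite)) set \<Rightarrow> (real ^ ('n::finite)) set set" where
  "VR s X = {\<sigma>. \<sigma> \<noteq> {} \<and> finite \<sigma> \<and> \<sigma> \<subseteq> X \<and> (\<forall>a\<in>\<sigma>. \<forall>b\<in>\<sigma>. dist a b \<le> s)}"

definition Lverts :: "real \<Rightarrow> nat \<Rightarrow> (real ^ ('n::finite)) set \<Rightarrow> (real ^ ('n::finite)) set" where
  "Lverts s k X = {x\<in>X. card {x'\<in>X. x' \<noteq> x \<and> dist x x' \<le> s} \<ge> k}"

definition Lcx :: "real \<Rightarrow> nat \<Rightarrow> (real ^ ('n::finite)) set \<Rightarrow> (real ^ ('n::finite)) set set" where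
  "Lcx s k X = {\<sigma>\<in>VR s X. \<sigma> \<subseteq> Lverts s k X}"

definition cx_verts :: "'a set set \<Rightarrow> 'a set" where
  "cx_verts K = \<Union>K"

definition cx_adj :: "'a set set \<Rightarrow> ('a \<times> 'a) set" where
  "cx_adj K = {(a,b). \<exists>\<sigma>\<in>K. a \<in> \<sigma> \<and> b \<in> \<sigma>}"

definition cx_comp :: "'a set set \<Rightarrow> 'a \<Rightarrow> 'a set" where
  "cx_comp K x = {y. (x,y) \<in> (cx_adj K)\<^sup>*}"

definition pi0 :: "'a set set \<Rightarrow> 'a set set" where
  "pi0 K = cx_comp K ` cx_verts K"

definition Gamma :: "nat \<Rightarrow> (real ^ ('n::finite)) set \<Rightarrow> (real \<times> (real ^ ('n::finite)) set) set" where
  "Gamma k X = {(s,C). s \<ge> 0 \<and> C \<in> pi0 (Lcx s k X)}"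

text \<open>(s,C) \<le> (t,D) iff s \<le> t and the map pi_0 L_s \<rightarrow> pi_0 L_t induced by inclusion sends C to D
  (i.e. the component in L_t of a representative of C is D).\<close>
definition gle :: "nat \<Rightarrow> (real ^ ('n::finite)) set \<Rightarrow> real \<times> (real ^ ('n::finite)) set \<Rightarrow> real \<times> (real ^ ('n::finite)) set \<Rightarrow> bool" where
  "gle k X p q \<longleftrightarrow> p \<in> Gamma k X \<and> q \<in> Gamma k X \<and> fst p \<le> fst q \<and>
     (\<forall>x\<in>snd p. cx_comp (Lcx (fst q) k X) x = snd q)"

definition is_lub :: "nat \<Rightarrow> (real ^ ('n::finite)) set \<Rightarrow> real \<times> (real ^ ('n::finite)) set \<Rightarrow> real \<times> (real ^ ('n::finite)) set \<Rightarrow> real \<times> (real ^ ('n::finite)) set \<Rightarrow> bool" where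
  "is_lub k X p q r \<longleftrightarrow> gle k X p r \<and> gle k X q r \<and>
     (\<forall>u. gle k X p u \<and> gle k X q u \<longrightarrow> gle k X r u)"

definition gjoin :: "nat \<Rightarrow> (real ^ ('n::finite)) set \<Rightarrow> real \<times> (real ^ ('n::finite)) set \<Rightarrow> real \<times> (real ^ ('n::finite)) set \<Rightarrow> real \<times> (real ^ ('n::finite)) set" where
  "gjoin k X p q = (THE r. is_lub k X p q r)"

definition branch_point :: "nat \<Rightarrow> (real ^ ('n::finite)) set \<Rightarrow> real \<times> (real ^ ('n::finite)) set \<Rightarrow> bool" where
  "branch_point k X p \<longleftrightarrow> p \<in> Gamma k X \<and>
     ((\<exists>s0 < fst p. \<forall>s. s0 \<le> s \<and> s < fst p \<longrightarrow>
         (\<exists>C0 C1. C0 \<noteq> C1 \<and> gle k X (s,C0) p \<and> gle k X (s,C1) p))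
      \<or> \<not> (\<exists>q. fst q < fst p \<and> gle k X q p))"

definition max_branch_below :: "nat \<Rightarrow> (real ^ ('n::finite)) set \<Rightarrow> real \<times> (real ^ ('n::finite)) set \<Rightarrow> real \<times> (real ^ ('n::finite)) set \<Rightarrow> bool" where
  "max_branch_below k X b p \<longleftrightarrow> branch_point k X b \<and> gle k X b p \<and>
     (\<forall>b'. branch_point k X b' \<and> gle k X b' p \<longrightarrow> gle k X b' b)"

end

theory Submission
  imports Defs
begin

text \<open>Elements of \<open>\<Gamma>\<^sub>k(X)\<close> above a fixed element are totally ordered, since the component
  of a point at a later radius is determined by the point. Hence if \<open>p\<close> and \<open>q\<close> are comparable,
  the statement reduces to the maximal branch point below the larger one. Otherwise the join
  \<open>p \<union> q\<close> is itself a branch point: just below its radius the components above \<open>p\<close> and above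
  \<open>q\<close> are still distinct. Finally, \<open>b\<^sub>1 \<union> b\<^sub>2\<close> lies above \<open>b\<^sub>1\<close> and \<open>b\<^sub>2\<close>, so it is comparable
  with \<open>p\<close> and with \<open>q\<close>; incomparability of \<open>p\<close> and \<open>q\<close> forces it above both, hence it equals
  \<open>p \<union> q\<close>.\<close>

lemma cx_adj_sym: "sym (cx_adj K)"
  unfolding sym_def cx_adj_def by blast

lemma cx_comp_self: "a \<in> cx_comp K a"
  unfolding cx_comp_def by simp

lemma cx_comp_eq_iff: "cx_comp K a = cx_comp K b \<longleftrightarrow> (a, b) \<in> (cx_adj K)\<^sup>*"
proof
  assume "cx_comp K a = cx_comp K b"
  then show "(a, b) \<in> (cx_adj K)\<^sup>*"
    using cx_comp_self[of b K] unfolding cx_comp_def by blast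
next
  assume ab: "(a, b) \<in> (cx_adj K)\<^sup>*"
  then have ba: "(b, a) \<in> (cx_adj K)\<^sup>*"
    by (rule symD[OF sym_rtrancl[OF cx_adj_sym]])
  show "cx_comp K a = cx_comp K b"
    unfolding cx_comp_def using rtrancl_trans[OF ab] rtrancl_trans[OF ba] by blast
qed

lemma cx_comp_subset_verts:
  assumes "a \<in> cx_verts K"
  shows "cx_comp K a \<subseteq> cx_verts K"
proof
  fix b assume "b \<in> cx_comp K a"
  then have "(a, b) \<in> (cx_adj K)\<^sup>*" unfolding cx_comp_def by simp
  then show "b \<in> cx_verts K"
    by (induction rule: rtrancl_induct) (use assms in \<open>auto simp: cx_adj_def cx_verts_def\<close>)
qed

lemma cx_comp_eq_mono:
  assumes "K \<subseteq> K'" "cx_comp K a = cx_comp K b"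
  shows "cx_comp K' a = cx_comp K' b"
proof -
  have "cx_adj K \<subseteq> cx_adj K'" using assms(1) unfolding cx_adj_def by blast
  then show ?thesis using assms(2) rtrancl_mono unfolding cx_comp_eq_iff by blast
qed

lemma Lverts_subset: "Lverts r k X \<subseteq> X"
  unfolding Lverts_def by auto

lemma cx_verts_Lcx: "0 \<le> r \<Longrightarrow> cx_verts (Lcx r k X) = Lverts r k X"
proof
  show "cx_verts (Lcx r k X) \<subseteq> Lverts r k X" unfolding cx_verts_def Lcx_def by auto
next
  assume "0 \<le> r"
  then have "{x} \<in> Lcx r k X" if "x \<in> Lverts r k X" for x
    using that Lverts_subset unfolding Lcx_def VR_def by auto
  then show "Lverts r k X \<subseteq> cx_verts (Lcx r k X)" unfolding cx_verts_def by blast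
qed

lemma Lcx_eq_if_same_distances:
  assumes "r' \<le> r" "\<forall>a\<in>X. \<forall>b\<in>X. dist a b \<le> r \<longrightarrow> dist a b \<le> r'"
  shows "Lcx r k X = Lcx r' k X"
proof -
  have dist_iff: "dist a b \<le> r \<longleftrightarrow> dist a b \<le> r'" if "a \<in> X" "b \<in> X" for a b
    using assms that by force
  then have "Lverts r k X = Lverts r' k X" unfolding Lverts_def
    by (smt (verit, best) Collect_cong)
  moreover have "VR r X = VR r' X" unfolding VR_def using dist_iff by (auto simp: subset_iff)
  ultimately show ?thesis unfolding Lcx_def by simp
qed

lemma Lverts_beyond_diameter:
  assumes "finite X" "card X \<ge> k + 1" "\<forall>a\<in>X. \<forall>b\<in>X. dist a b \<le> R"
  shows "Lverts R k X = X"
proof -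
  have "z \<in> Lverts R k X" if z: "z \<in> X" for z
  proof -
    have "{x'\<in>X. x' \<noteq> z \<and> dist z x' \<le> R} = X - {z}" using assms(3) z by auto
    moreover have "card (X - {z}) \<ge> k" using assms(1,2) z by simp
    ultimately show ?thesis unfolding Lverts_def using z by simp
  qed
  then show ?thesis using Lverts_subset by blast
qed

lemma cx_comp_eq_beyond_diameter:
  assumes "finite X" "card X \<ge> k + 1" "\<forall>a\<in>X. \<forall>b\<in>X. dist a b \<le> R" "x \<in> X" "y \<in> X"
  shows "cx_comp (Lcx R k X) x = cx_comp (Lcx R k X) y"
proof -
  have "0 \<le> R" using assms(3,4) by force
  then have "{x, y} \<in> Lcx R k X"
    unfolding Lcx_def VR_def Lverts_beyond_diameter[OF assms(1-3)] using assms(3-5) by auto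
  then have "(x, y) \<in> cx_adj (Lcx R k X)" unfolding cx_adj_def by blast
  then show ?thesis unfolding cx_comp_eq_iff by blast
qed

lemma Gamma_iff: "p \<in> Gamma k X \<longleftrightarrow> fst p \<ge> 0 \<and> snd p \<in> pi0 (Lcx (fst p) k X)"
  by (cases p) (simp add: Gamma_def)

lemma Gamma_nonempty:
  assumes "p \<in> Gamma k X"
  obtains x where "x \<in> snd p"
proof -
  obtain v where "snd p = cx_comp (Lcx (fst p) k X) v"
    using assms unfolding Gamma_iff pi0_def by blast
  then have "v \<in> snd p" using cx_comp_self by metis
  then show ?thesis by (rule that)
qed

lemma Gamma_eq_cx_comp:
  assumes "p \<in> Gamma k X" "x \<in> snd p"
  shows "snd p = cx_comp (Lcx (fst p) k X) x"
proof -
  obtain v where v: "snd p = cx_comp (Lcx (fst p) k X) v"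
    using assms(1) unfolding Gamma_iff pi0_def by blast
  then have "(v, x) \<in> (cx_adj (Lcx (fst p) k X))\<^sup>*" using assms(2) unfolding cx_comp_def by simp
  then show ?thesis using v cx_comp_eq_iff by metis
qed

lemma Gamma_mem_Lverts:
  assumes "p \<in> Gamma k X" "x \<in> snd p"
  shows "x \<in> Lverts (fst p) k X"
proof -
  have nonneg: "0 \<le> fst p" using assms(1) unfolding Gamma_iff by simp
  obtain v where v: "v \<in> cx_verts (Lcx (fst p) k X)" "snd p = cx_comp (Lcx (fst p) k X) v"
    using assms(1) unfolding Gamma_iff pi0_def by blast
  then have "x \<in> cx_verts (Lcx (fst p) k X)"
    using assms(2) cx_comp_subset_verts[OF v(1)] unfolding v(2) by blast
  then show ?thesis unfolding cx_verts_Lcx[OF nonneg] .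
qed

lemma gle_Gamma: "gle k X p q \<Longrightarrow> p \<in> Gamma k X \<and> q \<in> Gamma k X"
  unfolding gle_def by auto

lemma gle_radius_le: "gle k X p q \<Longrightarrow> fst p \<le> fst q"
  unfolding gle_def by simp

lemma gjoin_commute: "gjoin k X p q = gjoin k X q p"
proof -
  have "is_lub k X p q = is_lub k X q p" by (auto simp: is_lub_def fun_eq_iff)
  then show ?thesis unfolding gjoin_def by simp
qed

context
  fixes k :: nat and X :: "(real ^ ('n::finite)) set"
  assumes finite_X: "finite X"
begin

lemma Lverts_mono: "r \<le> r' \<Longrightarrow> Lverts r k X \<subseteq> Lverts r' k X"
proof
  fix x assume r: "r \<le> r'" and x: "x \<in> Lverts r k X"
  have "card {x'\<in>X. x' \<noteq> x \<and> dist x x' \<le> r} \<le> card {x'\<in>X. x' \<noteq> x \<and> dist x x' \<le> r'}"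
    by (rule card_mono) (use finite_X r in auto)
  then show "x \<in> Lverts r' k X" using x unfolding Lverts_def by auto
qed

lemma Lcx_mono:
  assumes "r \<le> r'"
  shows "Lcx r k X \<subseteq> Lcx r' k X"
proof
  fix \<sigma> assume "\<sigma> \<in> Lcx r k X"
  then have "\<sigma> \<in> VR r X" "\<sigma> \<subseteq> Lverts r k X" unfolding Lcx_def by auto
  then have "\<sigma> \<in> VR r' X" "\<sigma> \<subseteq> Lverts r' k X"
    using assms Lverts_mono[OF assms] unfolding VR_def by force+
  then show "\<sigma> \<in> Lcx r' k X" unfolding Lcx_def by simp
qed

text \<open>The witness is the largest pairwise distance in \<open>[m, r]\<close>, or \<open>m\<close> if there is none.\<close>

lemma Lcx_attained_at_distance:
  assumes "m \<le> r"
  shows "\<exists>r'\<in>insert m ((\<lambda>(a, b). dist a b) ` (X \<times> X)). m \<le> r' \<and> r' \<le> r \<and> Lcx r' k X = Lcx r k X"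
proof -
  define D where "D = (\<lambda>(a, b). dist a b) ` (X \<times> X)"
  define r' where "r' = Max (insert m {d\<in>D. d \<le> r})"
  have fin: "finite (insert m {d\<in>D. d \<le> r})" unfolding D_def using finite_X by simp
  have "r' \<le> r" unfolding r'_def using fin assms by (subst Max_le_iff) auto
  moreover have "m \<le> r'" unfolding r'_def using fin by (rule Max_ge) simp
  moreover have "r' \<in> insert m D" unfolding r'_def using Max_in[OF fin] by blast
  moreover have "dist a b \<le> r'" if "a \<in> X" "b \<in> X" "dist a b \<le> r" for a b
  proof -
    have "dist a b \<in> insert m {d\<in>D. d \<le> r}" using that unfolding D_def by force
    then show ?thesis unfolding r'_def using fin by (simp only: Max_ge)
  qed
  then have "Lcx r k X = Lcx r' k X"
    using Lcx_eq_if_same_distances[OF \<open>r' \<le> r\<close>] by blast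
  ultimately show ?thesis unfolding D_def by auto
qed

lemma least_merging_radius:
  assumes "card X \<ge> k + 1" "x \<in> X" "y \<in> X"
  obtains r0 where "m \<le> r0" "cx_comp (Lcx r0 k X) x = cx_comp (Lcx r0 k X) y"
    "\<And>r. m \<le> r \<Longrightarrow> cx_comp (Lcx r k X) x = cx_comp (Lcx r k X) y \<Longrightarrow> r0 \<le> r"
proof -
  define D where "D = (\<lambda>(a, b). dist a b) ` (X \<times> X)"
  define P where "P r \<longleftrightarrow> m \<le> r \<and> cx_comp (Lcx r k X) x = cx_comp (Lcx r k X) y" for r
  define F where "F = {r \<in> insert m D. P r}"
  have finite_D: "finite D" unfolding D_def using finite_X by simp
  then have finite_F: "finite F" unfolding F_def by simp
  have below_in_F: "\<exists>r'\<in>F. r' \<le> r" if "P r" for r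
  proof -
    have "m \<le> r" using that unfolding P_def by simp
    then obtain r' where r': "r' \<in> insert m D" "m \<le> r'" "r' \<le> r" "Lcx r' k X = Lcx r k X"
      unfolding D_def by (blast dest: Lcx_attained_at_distance)
    then have "P r'" using that unfolding P_def by simp
    then have "r' \<in> F" using r'(1) unfolding F_def by simp
    then show ?thesis using r'(3) by blast
  qed
  define R where "R = max m (Max D)"
  have "dist a b \<le> R" if "a \<in> X" "b \<in> X" for a b
  proof -
    have "dist a b \<in> D" using that unfolding D_def by force
    then have "dist a b \<le> Max D" using finite_D by (rule Max_ge[rotated])
    then show ?thesis unfolding R_def by linarith
  qed
  then have "cx_comp (Lcx R k X) x = cx_comp (Lcx R k X) y"
    using cx_comp_eq_beyond_diameter[OF finite_X assms(1) _ assms(2,3)] by blast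
  then have "P R" unfolding P_def R_def by simp
  then have "F \<noteq> {}" using below_in_F by blast
  then have "Min F \<in> F" using finite_F Min_in by blast
  then have "P (Min F)" unfolding F_def by simp
  moreover have "Min F \<le> r" if "P r" for r
  proof -
    from below_in_F[OF \<open>P r\<close>] obtain r' where "r' \<in> F" "r' \<le> r" by blast
    then show ?thesis using Min_le[OF finite_F] by fastforce
  qed
  ultimately show ?thesis using that unfolding P_def by blast
qed

lemma Gamma_cx_compI:
  assumes "p \<in> Gamma k X" "x \<in> snd p" "fst p \<le> t"
  shows "(t, cx_comp (Lcx t k X) x) \<in> Gamma k X"
proof -
  have "x \<in> Lverts t k X" using Gamma_mem_Lverts[OF assms(1,2)] Lverts_mono[OF assms(3)] by blast
  moreover have "0 \<le> t" using assms(1,3) unfolding Gamma_iff by linarith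
  ultimately show ?thesis unfolding Gamma_iff pi0_def by (simp add: cx_verts_Lcx)
qed

lemma gle_iff:
  assumes "p \<in> Gamma k X" "q \<in> Gamma k X" "x \<in> snd p"
  shows "gle k X p q \<longleftrightarrow> fst p \<le> fst q \<and> snd q = cx_comp (Lcx (fst q) k X) x"
proof -
  have "cx_comp (Lcx (fst q) k X) z = cx_comp (Lcx (fst q) k X) x"
    if "z \<in> snd p" "fst p \<le> fst q" for z
  proof (rule cx_comp_eq_mono[OF Lcx_mono[OF that(2)]])
    show "cx_comp (Lcx (fst p) k X) z = cx_comp (Lcx (fst p) k X) x"
      using Gamma_eq_cx_comp[OF assms(1)] assms(3) that(1) by simp
  qed
  then show ?thesis unfolding gle_def using assms by blast
qed

lemma gle_refl:
  assumes "p \<in> Gamma k X"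
  shows "gle k X p p"
proof -
  obtain x where "x \<in> snd p" using Gamma_nonempty[OF assms] .
  then show ?thesis using gle_iff[OF assms assms] Gamma_eq_cx_comp[OF assms] by simp
qed

lemma gle_trans:
  assumes "gle k X p q" "gle k X q r"
  shows "gle k X p r"
proof -
  have G: "p \<in> Gamma k X" "q \<in> Gamma k X" "r \<in> Gamma k X"
    using gle_Gamma[OF assms(1)] gle_Gamma[OF assms(2)] by auto
  obtain x where x: "x \<in> snd p" using Gamma_nonempty[OF G(1)] .
  have pq: "fst p \<le> fst q" "snd q = cx_comp (Lcx (fst q) k X) x"
    using gle_iff[OF G(1,2) x] assms(1) by auto
  then have "x \<in> snd q" using cx_comp_self by metis
  then have "fst q \<le> fst r" "snd r = cx_comp (Lcx (fst r) k X) x"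
    using gle_iff[OF G(2,3)] assms(2) by auto
  then show ?thesis using gle_iff[OF G(1,3) x] pq(1) by simp
qed

lemma gle_same_radius_eq:
  assumes "gle k X p q" "fst p = fst q"
  shows "p = q"
proof -
  have G: "p \<in> Gamma k X" "q \<in> Gamma k X" using gle_Gamma[OF assms(1)] by auto
  obtain x where x: "x \<in> snd p" using Gamma_nonempty[OF G(1)] .
  have "snd q = snd p"
    using gle_iff[OF G x] assms Gamma_eq_cx_comp[OF G(1) x] by simp
  then show ?thesis using assms(2) by (simp add: prod_eq_iff)
qed

lemma gle_antisym:
  assumes "gle k X p q" "gle k X q p"
  shows "p = q"
proof -
  have "fst p = fst q" using gle_radius_le[OF assms(1)] gle_radius_le[OF assms(2)] by simp
  then show ?thesis using gle_same_radius_eq[OF assms(1)] by blast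
qed

lemma gle_of_common_lower_bound:
  assumes "gle k X a p" "gle k X a q" "fst p \<le> fst q"
  shows "gle k X p q"
proof -
  have G: "a \<in> Gamma k X" "p \<in> Gamma k X" "q \<in> Gamma k X"
    using gle_Gamma[OF assms(1)] gle_Gamma[OF assms(2)] by auto
  obtain x where x: "x \<in> snd a" using Gamma_nonempty[OF G(1)] .
  have "snd p = cx_comp (Lcx (fst p) k X) x" using gle_iff[OF G(1,2) x] assms(1) by simp
  then have xp: "x \<in> snd p" using cx_comp_self by metis
  have "snd q = cx_comp (Lcx (fst q) k X) x" using gle_iff[OF G(1,3) x] assms(2) by simp
  then show ?thesis using gle_iff[OF G(2,3) xp] assms(3) by simp
qed

lemma gle_linear_above:
  assumes "gle k X a p" "gle k X a q"
  shows "gle k X p q \<or> gle k X q p"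
proof (cases "fst p \<le> fst q")
  case True
  then show ?thesis using gle_of_common_lower_bound[OF assms] by blast
next
  case False
  then show ?thesis using gle_of_common_lower_bound[OF assms(2,1)] by simp
qed

lemma gle_exists_at_radius:
  assumes "p \<in> Gamma k X" "fst p \<le> t"
  obtains C where "gle k X p (t, C)"
proof -
  obtain x where x: "x \<in> snd p" using Gamma_nonempty[OF assms(1)] .
  have G: "(t, cx_comp (Lcx t k X) x) \<in> Gamma k X" using Gamma_cx_compI[OF assms(1) x assms(2)] .
  have "gle k X p (t, cx_comp (Lcx t k X) x)" using gle_iff[OF assms(1) G x] assms(2) by simp
  then show ?thesis by (rule that)
qed

lemma gjoin_eqI:
  assumes "is_lub k X p q r"
  shows "gjoin k X p q = r"
  unfolding gjoin_def
proof (rule the_equality)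
  show "is_lub k X p q r" by (rule assms)
  fix r' assume "is_lub k X p q r'"
  then have "gle k X r r'" "gle k X r' r" using assms unfolding is_lub_def by blast+
  then show "r' = r" by (rule gle_antisym[rotated])
qed

text \<open>The join of \<open>p\<close> and \<open>q\<close> is the class of a representative of \<open>p\<close> at the least radius
  \<open>\<ge> max (fst p) (fst q)\<close> at which it is connected to a representative of \<open>q\<close>.\<close>

lemma is_lub_gjoin:
  assumes "card X \<ge> k + 1" "p \<in> Gamma k X" "q \<in> Gamma k X"
  shows "is_lub k X p q (gjoin k X p q)"
proof -
  obtain x where x: "x \<in> snd p" using Gamma_nonempty[OF assms(2)] .
  obtain y where y: "y \<in> snd q" using Gamma_nonempty[OF assms(3)] .
  have xy: "x \<in> X" "y \<in> X" using Gamma_mem_Lverts assms(2,3) x y Lverts_subset by blast+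
  obtain r0 where r0: "max (fst p) (fst q) \<le> r0" "cx_comp (Lcx r0 k X) x = cx_comp (Lcx r0 k X) y"
    and r0_least: "\<And>r. max (fst p) (fst q) \<le> r \<Longrightarrow> cx_comp (Lcx r k X) x = cx_comp (Lcx r k X) y \<Longrightarrow> r0 \<le> r"
    using least_merging_radius[where m = "max (fst p) (fst q)", OF assms(1) xy] by blast
  define j where "j = (r0, cx_comp (Lcx r0 k X) x)"
  have jG: "j \<in> Gamma k X" unfolding j_def using Gamma_cx_compI[OF assms(2) x] r0(1) by simp
  have xj: "x \<in> snd j" unfolding j_def using cx_comp_self by simp
  have "gle k X p j" using gle_iff[OF assms(2) jG x] r0(1) unfolding j_def by simp
  moreover have "gle k X q j" using gle_iff[OF assms(3) jG y] r0 unfolding j_def by simp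
  moreover have "gle k X j u" if "gle k X p u" "gle k X q u" for u
  proof -
    have uG: "u \<in> Gamma k X" using gle_Gamma[OF that(1)] by blast
    have "fst p \<le> fst u" "snd u = cx_comp (Lcx (fst u) k X) x" using gle_iff[OF assms(2) uG x] that(1) by auto
    moreover have "fst q \<le> fst u" "snd u = cx_comp (Lcx (fst u) k X) y" using gle_iff[OF assms(3) uG y] that(2) by auto
    ultimately have "r0 \<le> fst u" using r0_least by simp
    then show ?thesis using gle_iff[OF jG uG xj] \<open>snd u = cx_comp (Lcx (fst u) k X) x\<close> unfolding j_def by simp
  qed
  ultimately have "is_lub k X p q j" unfolding is_lub_def by blast
  then show ?thesis using gjoin_eqI by simp
qed

lemma gjoin_eq_right:
  assumes "gle k X p q"
  shows "gjoin k X p q = q"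
proof (rule gjoin_eqI)
  have "gle k X q q" using gle_refl gle_Gamma[OF assms] by blast
  then show "is_lub k X p q q" using assms unfolding is_lub_def by blast
qed

lemma max_branch_below_self: "branch_point k X b \<Longrightarrow> max_branch_below k X b b"
  unfolding max_branch_below_def branch_point_def using gle_refl by blast

lemma max_branch_below_gjoin_of_gle:
  assumes "gle k X p q" "max_branch_below k X b1 p" "max_branch_below k X b2 q"
  shows "max_branch_below k X (gjoin k X b1 b2) (gjoin k X p q)"
proof -
  have "gle k X b1 b2" using assms gle_trans unfolding max_branch_below_def by blast
  then show ?thesis using assms(3) by (simp add: gjoin_eq_right[OF assms(1)] gjoin_eq_right)
qed

lemma gjoin_branch_point_if_incomparable:
  assumes "card X \<ge> k + 1" "p \<in> Gamma k X" "q \<in> Gamma k X" "\<not> gle k X p q" "\<not> gle k X q p"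
  shows "branch_point k X (gjoin k X p q)"
proof -
  define j where "j = gjoin k X p q"
  have lub: "gle k X p j" "gle k X q j" "\<And>u. gle k X p u \<Longrightarrow> gle k X q u \<Longrightarrow> gle k X j u"
    using is_lub_gjoin[OF assms(1-3)] unfolding is_lub_def j_def by auto
  have "fst p \<noteq> fst j" "fst q \<noteq> fst j"
    using gle_same_radius_eq[OF lub(1)] gle_same_radius_eq[OF lub(2)] lub(1,2) assms(4,5) by blast+
  then have "max (fst p) (fst q) < fst j" using gle_radius_le[OF lub(1)] gle_radius_le[OF lub(2)] by simp
  moreover have "\<exists>C0 C1. C0 \<noteq> C1 \<and> gle k X (s, C0) j \<and> gle k X (s, C1) j"
    if s: "max (fst p) (fst q) \<le> s" "s < fst j" for s
  proof -
    obtain C0 where C0: "gle k X p (s, C0)" using gle_exists_at_radius[OF assms(2)] s(1) by auto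
    obtain C1 where C1: "gle k X q (s, C1)" using gle_exists_at_radius[OF assms(3)] s(1) by auto
    have "gle k X (s, C0) j" "gle k X (s, C1) j"
      using gle_of_common_lower_bound[OF C0 lub(1)] gle_of_common_lower_bound[OF C1 lub(2)] s(2)
      by simp_all
    moreover have "C0 \<noteq> C1"
    proof
      assume "C0 = C1"
      then have "gle k X j (s, C0)" using lub(3) C0 C1 by simp
      then show False using gle_radius_le[of k X j "(s, C0)"] s(2) by simp
    qed
    ultimately show ?thesis by blast
  qed
  moreover have "j \<in> Gamma k X" using gle_Gamma[OF lub(1)] by simp
  ultimately show ?thesis unfolding branch_point_def j_def[symmetric] by blast
qed

lemma gjoin_eq_gjoin_of_below_incomparable:
  assumes "card X \<ge> k + 1" "gle k X b1 p" "gle k X b2 q" "\<not> gle k X p q" "\<not> gle k X q p"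
  shows "gjoin k X b1 b2 = gjoin k X p q"
proof -
  define c where "c = gjoin k X b1 b2"
  define j where "j = gjoin k X p q"
  have c: "gle k X b1 c" "gle k X b2 c" "\<And>u. gle k X b1 u \<Longrightarrow> gle k X b2 u \<Longrightarrow> gle k X c u"
    using is_lub_gjoin[OF assms(1)] gle_Gamma[OF assms(2)] gle_Gamma[OF assms(3)]
    unfolding is_lub_def c_def by blast+
  have j: "gle k X p j" "gle k X q j" "\<And>u. gle k X p u \<Longrightarrow> gle k X q u \<Longrightarrow> gle k X j u"
    using is_lub_gjoin[OF assms(1)] gle_Gamma[OF assms(2)] gle_Gamma[OF assms(3)]
    unfolding is_lub_def j_def by blast+
  have "gle k X c j" using c(3) gle_trans[OF assms(2) j(1)] gle_trans[OF assms(3) j(2)] .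
  have "gle k X p c"
  proof (rule ccontr)
    assume "\<not> gle k X p c"
    then have "gle k X c p" using gle_linear_above[OF assms(2) c(1)] by blast
    moreover have "\<not> gle k X q c" using gle_trans[OF _ \<open>gle k X c p\<close>] assms(5) by blast
    then have "gle k X c q" using gle_linear_above[OF assms(3) c(2)] by blast
    ultimately show False using gle_linear_above assms(4,5) by blast
  qed
  moreover have "gle k X q c"
  proof (rule ccontr)
    assume "\<not> gle k X q c"
    then have "gle k X c q" using gle_linear_above[OF assms(3) c(2)] by blast
    then show False using gle_trans[OF \<open>gle k X p c\<close>] assms(4) by blast
  qed
  ultimately have "gle k X j c" using j(3) by blast
  then show ?thesis using gle_antisym[OF \<open>gle k X c j\<close>] unfolding c_def j_def by simp
qed

end

theorem lemma12:
  fixes X :: "(real ^ ('n::finite)) set" and k :: nat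
    and p q b1 b2 :: "real \<times> (real ^ ('n::finite)) set"
  assumes "finite X" and "card X \<ge> k + 1"
    and "p \<in> Gamma k X" and "q \<in> Gamma k X"
    and "max_branch_below k X b1 p" and "max_branch_below k X b2 q"
  shows "max_branch_below k X (gjoin k X b1 b2) (gjoin k X p q)"
proof -
  consider "gle k X p q" | "gle k X q p" | "\<not> gle k X p q" "\<not> gle k X q p" by blast
  then show ?thesis
  proof cases
    case 1
    then show ?thesis using max_branch_below_gjoin_of_gle[OF assms(1) _ assms(5,6)] by blast
  next
    case 2
    then show ?thesis using max_branch_below_gjoin_of_gle[OF assms(1) _ assms(6,5)] gjoin_commute by metis
  next
    case 3
    have "gle k X b1 p" "gle k X b2 q" using assms(5,6) unfolding max_branch_below_def by blast+
    then have "gjoin k X b1 b2 = gjoin k X p q"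
      using gjoin_eq_gjoin_of_below_incomparable[OF assms(1,2)] 3 by blast
    moreover have "branch_point k X (gjoin k X p q)"
      using gjoin_branch_point_if_incomparable[OF assms(1-4)] 3 by blast
    ultimately show ?thesis using max_branch_below_self[OF assms(1)] by simp
  qed
qed

end
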